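(* Let $1<p<\infty$, $q=\frac p{p-1}$, $\beta\ge0$, $0\le\gamma<\beta+\frac1p$, let $f\in L^p$, let $\omega$ be a function of modulus of continuity type, and let $x$ be fixed. If for all $n\ge1$ \[ \left\{\int_{\frac{\pi}{n+1}}^{\pi}\left(\frac{|\varphi_x(t)|}{t^{\gamma}\omega(t)}\right)^{p}\sin^{\beta p}\frac t2\,dt\right\}^{1/p}=O_x\!\left((n+1)^{\gamma}\right), \] then for all $n\ge1$ \[ \sum_{m=1}^{n}(m+1)^{\beta+1-\frac2q}\left\{\int_{\frac{\pi}{m+1}}^{\frac{\pi}{m}}\left(\frac{|\varphi_x(t)|}{\omega(t)}\right)^{p}\sin^{\beta p}\frac t2\,dt\right\}^{1/p}=O_x\!\left((n+1)^{\beta+1/p}\right). \]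
   Context: $L^p$ is the class of $2\pi$-periodic real functions Lebesgue integrable with $p$-th power over $[-\pi,\pi]$. $\varphi_x(t)=f(x+t)+f(x-t)-2f(x)$. A function $\omega$ of modulus of continuity type on $[0,2\pi]$ is a nondecreasing continuous function with $\omega(0)=0$ and $\omega(\delta_1+\delta_2)\le\omega(\delta_1)+\omega(\delta_2)$ for $0\le\delta_1\le\delta_2\le\delta_1+\delta_2\le2\pi$ (implicitly positive on $(0,2\pi]$). $O_x(\cdot)$ means bounded by a constant (possibly depending on $x$) times the indicated quantity, uniformly in $n$. *)

theory Defs
  imports "HOL-Analysis.Analysis"
begin

definition Lp_periodic :: "real \<Rightarrow> (real \<Rightarrow> real) \<Rightarrow> bool" where
  "Lp_periodic p f \<longleftrightarrow> f \<in> borel_measurable lborel \<and> (\<forall>t. f (t + 2*pi) = f t)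
     \<and> set_integrable lborel {-pi..pi} (\<lambda>t. \<bar>f t\<bar> powr p)"

definition modulus_type :: "(real \<Rightarrow> real) \<Rightarrow> bool" where
  "modulus_type \<omega> \<longleftrightarrow> mono_on {0..2*pi} \<omega> \<and> continuous_on {0..2*pi} \<omega> \<and> \<omega> 0 = 0
     \<and> (\<forall>d1 d2. 0 \<le> d1 \<and> d1 \<le> d2 \<and> d1 + d2 \<le> 2*pi \<longrightarrow> \<omega> (d1 + d2) \<le> \<omega> d1 + \<omega> d2)
     \<and> (\<forall>t\<in>{0<..2*pi}. \<omega> t > 0)"

definition phi :: "(real \<Rightarrow> real) \<Rightarrow> real \<Rightarrow> real \<Rightarrow> real" where
  "phi f x t = f (x + t) + f (x - t) - 2 * f x"

end

theory Submission
  imports Defs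
begin

text \<open>
  On the block [pi/(m+1), pi/m] we have t^gamma <= (2 pi/(m+1))^gamma, so the m-th integral of the
  conclusion is at most (2 pi)^gamma (m+1)^(-gamma) J_m^(1/p), where J_m is the integral of the
  integrand of the hypothesis over the same block. With delta = beta + 1 - 2/q - gamma, Hoelder's
  inequality for sums bounds the sum of (m+1)^delta J_m^(1/p) by
  (sum of (m+1)^(delta q))^(1/q) (sum of J_m)^(1/p). The first factor is O((n+1)^(delta + 1/q))
  because delta q > -1, which is exactly gamma < beta + 1/p; the blocks tile [pi/(n+1), pi], so the
  second factor is O((n+1)^gamma) by the hypothesis, and delta + 1/q + gamma = beta + 1/p.
  The block integrals only add up because the integrands are integrable away from 0; this is where
  f in L^p and the continuity and positivity of omega enter.
\<close>

lemma Hoelder_inequality_sum: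
  fixes a b :: "'i \<Rightarrow> real"
  assumes "p > 1" "q > 1" "1 / p + 1 / q = 1"
    and a: "\<And>i. i \<in> I \<Longrightarrow> 0 \<le> a i" and b: "\<And>i. i \<in> I \<Longrightarrow> 0 \<le> b i"
  shows "(\<Sum>i\<in>I. a i * b i) \<le> (\<Sum>i\<in>I. a i powr p) powr (1 / p) * (\<Sum>i\<in>I. b i powr q) powr (1 / q)"
proof (cases "finite I")
  case False
  then show ?thesis by simp
next
  case True
  define A where "A = (\<Sum>i\<in>I. a i powr p)"
  define B where "B = (\<Sum>i\<in>I. b i powr q)"
  consider "A = 0" | "B = 0" | "0 < A" "0 < B"
    unfolding A_def B_def by (metis less_eq_real_def powr_ge_zero sum_nonneg)
  then show ?thesis
  proof cases
    case 1
    then have "\<forall>i\<in>I. a i = 0" using True a by (simp add: A_def sum_nonneg_eq_0_iff)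
    then show ?thesis by simp
  next
    case 2
    then have "\<forall>i\<in>I. b i = 0" using True b by (simp add: B_def sum_nonneg_eq_0_iff)
    then show ?thesis by simp
  next
    case 3
    define \<alpha> where "\<alpha> = A powr (1 / p)"
    define \<beta> where "\<beta> = B powr (1 / q)"
    have "0 < \<alpha>" "0 < \<beta>" using 3 by (simp_all add: \<alpha>_def \<beta>_def)
    have Young: "a i * b i / (\<alpha> * \<beta>) \<le> a i powr p / (A * p) + b i powr q / (B * q)" if "i \<in> I" for i
    proof -
      have "(a i / \<alpha>) * (b i / \<beta>) \<le> (a i / \<alpha>) powr p / p + (b i / \<beta>) powr q / q"
        using assms(1-3) a[OF that] b[OF that] \<open>0 < \<alpha>\<close> \<open>0 < \<beta>\<close>
        by (intro Youngs_inequality) auto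
      moreover have "\<alpha> powr p = A" "\<beta> powr q = B"
        using 3 assms(1,2) by (simp_all add: \<alpha>_def \<beta>_def powr_powr)
      ultimately show ?thesis
        using a[OF that] b[OF that] \<open>0 < \<alpha>\<close> \<open>0 < \<beta>\<close> by (simp add: powr_divide)
    qed
    have "(\<Sum>i\<in>I. a i * b i) / (\<alpha> * \<beta>) \<le> (\<Sum>i\<in>I. a i powr p / (A * p) + b i powr q / (B * q))"
      unfolding sum_divide_distrib by (intro sum_mono Young)
    also have "\<dots> = 1"
      using 3 assms(1-3) by (simp add: sum.distrib flip: sum_divide_distrib A_def B_def)
    finally show ?thesis using \<open>0 < \<alpha>\<close> \<open>0 < \<beta>\<close> by (simp add: \<alpha>_def \<beta>_def A_def B_def)
  qed
qed

lemma powr_concave_increment: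
  fixes y s :: real
  assumes "1 \<le> y" "0 < s" "s < 1"
  shows "s * y powr (s - 1) \<le> y powr s - (y - 1) powr s"
proof (cases "y = 1")
  case True
  then show ?thesis using assms by simp
next
  case False
  then have "0 < y - 1" using assms by simp
  have Young: "(y - 1) powr s * y powr (1 - s) \<le> y - s"
    using Youngs_inequality_0[of s "1 - s" "y - 1" y] \<open>0 < y - 1\<close> assms
    by (simp add: algebra_simps)
  have "y * y powr (s - 1) = y powr s"
    using assms by (simp add: powr_diff)
  have "(y - 1) powr s = (y - 1) powr s * y powr (1 - s) * y powr (s - 1)"
    using assms by (simp add: mult.assoc flip: powr_add)
  also have "\<dots> \<le> (y - s) * y powr (s - 1)"
    using Young by (intro mult_right_mono) auto
  also have "\<dots> = y powr s - s * y powr (s - 1)"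
    using \<open>y * y powr (s - 1) = y powr s\<close> by (simp add: left_diff_distrib)
  finally show ?thesis by simp
qed

lemma sum_shifted_powr_le:
  fixes e :: real
  assumes "-1 < e"
  shows "\<exists>c. \<forall>n. (\<Sum>m = 1..n. (real m + 1) powr e) \<le> c * (real n + 1) powr (e + 1)"
proof (cases "0 \<le> e")
  case True
  have "(\<Sum>m = 1..n. (real m + 1) powr e) \<le> 1 * (real n + 1) powr (e + 1)" for n
  proof -
    have "(\<Sum>m = 1..n. (real m + 1) powr e) \<le> (\<Sum>m = 1..n. (real n + 1) powr e)"
      by (intro sum_mono powr_mono2 True) auto
    also have "\<dots> = real n * (real n + 1) powr e" by simp
    also have "\<dots> \<le> (real n + 1) * (real n + 1) powr e" by (intro mult_right_mono) auto
    finally show ?thesis by (simp add: powr_add mult.commute)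
  qed
  then show ?thesis by blast
next
  case False
  define s where "s = e + 1"
  have s: "0 < s" "s < 1" using assms False by (auto simp: s_def)
  have "(\<Sum>m = 1..n. (real m + 1) powr (s - 1)) \<le> 1 / s * (real n + 1) powr s" for n
  proof (induction n)
    case 0
    then show ?case using s by simp
  next
    case (Suc n)
    have "s * (real n + 2) powr (s - 1) \<le> (real n + 2) powr s - (real n + 1) powr s"
      using powr_concave_increment[of "real n + 2" s] s by (simp add: add.commute)
    then have "(real n + 2) powr (s - 1) \<le> 1 / s * (real n + 2) powr s - 1 / s * (real n + 1) powr s"
      using s by (simp add: field_simps)
    then show ?case using Suc by (simp add: add.commute)
  qed
  then show ?thesis unfolding s_def by (intro exI[of _ "1 / (e + 1)"]) simp
qed

lemma weighted_root_sum_le: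
  fixes J :: "nat \<Rightarrow> real"
  assumes "1 < p" "1 < q" "1 / p + 1 / q = 1" "-1 < \<delta> * q"
    and J: "\<And>m. 0 \<le> J m"
    and partial_sums: "\<And>n. 1 \<le> n \<Longrightarrow> (\<Sum>m = 1..n. J m) powr (1 / p) \<le> C * (real n + 1) powr \<gamma>"
  shows "\<exists>c. \<forall>n. 1 \<le> n \<longrightarrow>
    (\<Sum>m = 1..n. (real m + 1) powr \<delta> * J m powr (1 / p)) \<le> c * (real n + 1) powr (\<delta> + 1 / q + \<gamma>)"
proof -
  obtain c where c: "\<And>n. (\<Sum>m = 1..n. (real m + 1) powr (\<delta> * q)) \<le> c * (real n + 1) powr (\<delta> * q + 1)"
    using sum_shifted_powr_le[OF assms(4)] by blast
  have "0 \<le> c" using c[of 0] by simp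
  show ?thesis
  proof (intro exI allI impI)
    fix n :: nat assume "1 \<le> n"
    have "(\<Sum>m = 1..n. (real m + 1) powr \<delta> * J m powr (1 / p))
        \<le> (\<Sum>m = 1..n. ((real m + 1) powr \<delta>) powr q) powr (1 / q)
          * (\<Sum>m = 1..n. (J m powr (1 / p)) powr p) powr (1 / p)"
      using assms(1-3) by (intro Hoelder_inequality_sum) auto
    also have "\<dots> = (\<Sum>m = 1..n. (real m + 1) powr (\<delta> * q)) powr (1 / q) * (\<Sum>m = 1..n. J m) powr (1 / p)"
      using J assms(1) by (simp add: powr_powr)
    also have "\<dots> \<le> (c * (real n + 1) powr (\<delta> * q + 1)) powr (1 / q) * (C * (real n + 1) powr \<gamma>)"
    proof (rule mult_mono')
      show "(\<Sum>m = 1..n. (real m + 1) powr (\<delta> * q)) powr (1 / q)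
          \<le> (c * (real n + 1) powr (\<delta> * q + 1)) powr (1 / q)"
        using c assms(2) by (intro powr_mono2 sum_nonneg) auto
    qed (use partial_sums[OF \<open>1 \<le> n\<close>] in auto)
    also have "\<dots> = c powr (1 / q) * C * (real n + 1) powr (\<delta> + 1 / q + \<gamma>)"
      using \<open>0 \<le> c\<close> assms(2)
      by (simp add: powr_mult powr_powr powr_add add_divide_distrib)
    finally show "(\<Sum>m = 1..n. (real m + 1) powr \<delta> * J m powr (1 / p))
        \<le> c powr (1 / q) * C * (real n + 1) powr (\<delta> + 1 / q + \<gamma>)" .
  qed
qed

lemma set_integrable_compose_affine:
  fixes g :: "real \<Rightarrow> real"
  assumes g: "\<And>c d. set_integrable lborel {c..d} g" and "s \<noteq> 0"
  shows "set_integrable lborel {a..b} (\<lambda>t. g (x + s * t))"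
proof -
  define c where "c = x - \<bar>s\<bar> * (\<bar>a\<bar> + \<bar>b\<bar>)"
  define d where "d = x + \<bar>s\<bar> * (\<bar>a\<bar> + \<bar>b\<bar>)"
  have "integrable lborel (\<lambda>t. indicator {c..d} (x + s * t) *\<^sub>R g (x + s * t))"
    using g[of c d] \<open>s \<noteq> 0\<close>
    by (subst lborel_integrable_real_affine_iff) (auto simp: set_integrable_def)
  then have int: "set_integrable lborel ((\<lambda>t. x + s * t) -` {c..d}) (\<lambda>t. g (x + s * t))"
    by (simp add: set_integrable_def indicator_def)
  have sub: "{a..b} \<subseteq> (\<lambda>t. x + s * t) -` {c..d}"
  proof
    fix t assume "t \<in> {a..b}"
    then have "\<bar>s * t\<bar> \<le> \<bar>s\<bar> * (\<bar>a\<bar> + \<bar>b\<bar>)"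
      by (auto simp: abs_mult intro!: mult_left_mono)
    then show "t \<in> (\<lambda>t. x + s * t) -` {c..d}" by (auto simp: c_def d_def)
  qed
  show ?thesis by (rule set_integrable_subset[OF int _ sub]) auto
qed

lemma set_integrable_periodic:
  fixes g :: "real \<Rightarrow> real"
  assumes g: "set_integrable lborel {a..a + T} g" and per: "\<And>t. g (t + T) = g t" and "0 < T"
  shows "set_integrable lborel {c..d} g"
proof -
  have shift: "set_integrable lborel {u + e..v + e} g"
    if uv: "set_integrable lborel {u..v} g" and e: "e = T \<or> e = - T" for u v e
  proof -
    have "g (t + e) = g t" for t using per[of t] per[of "t - T"] e by auto
    then have "(\<lambda>t. indicator {u + e..v + e} (e + 1 * t) *\<^sub>R g (e + 1 * t))
        = (\<lambda>t. indicator {u..v} t *\<^sub>R g t)"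
      by (auto simp: indicator_def add.commute)
    with uv show ?thesis
      using lborel_integrable_real_affine_iff[of 1 "\<lambda>t. indicator {u + e..v + e} t *\<^sub>R g t" e]
      by (simp add: set_integrable_def)
  qed
  have wide: "set_integrable lborel {a - N * T..a + T + N * T} g" for N :: nat
  proof (induction N)
    case 0
    then show ?case using g by simp
  next
    case (Suc N)
    let ?I = "{a - N * T..a + T + N * T}"
    have union: "set_integrable lborel ({a - N * T + - T..a + T + N * T + - T} \<union> ?I
        \<union> {a - N * T + T..a + T + N * T + T}) g"
      by (intro set_integrable_Un shift Suc) auto
    have nonneg: "0 \<le> T * real N" using \<open>0 < T\<close> by simp
    have "{a - Suc N * T..a + T + Suc N * T} \<subseteq> {a - N * T + - T..a + T + N * T + - T} \<union> ?I
        \<union> {a - N * T + T..a + T + N * T + T}"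
      by (auto simp: algebra_simps) (use nonneg in linarith)+
    then show ?case by (rule set_integrable_subset[OF union, rotated]) auto
  qed
  obtain N where "\<bar>a\<bar> + \<bar>c\<bar> + \<bar>d\<bar> < real N * T"
    using ex_less_of_nat_mult \<open>0 < T\<close> by blast
  then have "{c..d} \<subseteq> {a - N * T..a + T + N * T}" using \<open>0 < T\<close> by auto
  then show ?thesis by (rule set_integrable_subset[OF wide, rotated]) auto
qed

lemma set_integrable_continuous_mult:
  fixes w g :: "real \<Rightarrow> real"
  assumes g: "set_integrable lborel {a..b} g" "g \<in> borel_measurable borel"
    and w: "continuous_on {a..b} w"
  shows "set_integrable lborel {a..b} (\<lambda>t. w t * g t)"
proof -
  obtain M where M: "\<And>t. t \<in> {a..b} \<Longrightarrow> \<bar>w t\<bar> \<le> M"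
    using compact_continuous_image[OF w compact_Icc] compact_imp_bounded bounded_iff
    by (metis image_eqI real_norm_def)
  show ?thesis
  proof (rule set_integrable_bound[OF set_integrable_mult_right[of M, OF g(1)]])
    have "(\<lambda>t. indicator {a..b} t *\<^sub>R w t) \<in> borel_measurable borel"
      by (rule borel_measurable_continuous_on_indicator[OF _ w]) simp
    then have "(\<lambda>t. (indicator {a..b} t *\<^sub>R w t) * g t) \<in> borel_measurable borel"
      using g(2) by measurable
    moreover have "(\<lambda>t. (indicator {a..b} t *\<^sub>R w t) * g t) = (\<lambda>t. indicator {a..b} t *\<^sub>R (w t * g t))"
      by (auto simp: indicator_def)
    ultimately show "set_borel_measurable lborel {a..b} (\<lambda>t. w t * g t)"
      by (simp add: set_borel_measurable_def)
    show "AE t in lborel. t \<in> {a..b} \<longrightarrow> norm (w t * g t) \<le> norm (M * g t)"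
    proof (intro AE_I2 impI)
      fix t assume "t \<in> {a..b}"
      then have "\<bar>w t\<bar> * \<bar>g t\<bar> \<le> M * \<bar>g t\<bar>" "0 \<le> M"
        using M[of t] by (auto intro: mult_right_mono)
      then show "norm (w t * g t) \<le> norm (M * g t)" by (simp add: abs_mult)
    qed
  qed
qed

lemma set_integral_root_le:
  fixes g h :: "'a \<Rightarrow> real"
  assumes "set_integrable M A g" "set_integrable M A h" "0 < p" "0 \<le> k"
    and "\<And>t. t \<in> A \<Longrightarrow> 0 \<le> g t" "\<And>t. t \<in> A \<Longrightarrow> g t \<le> k powr p * h t"
  shows "(LINT t:A|M. g t) powr (1 / p) \<le> k * (LINT t:A|M. h t) powr (1 / p)"
proof -
  have nonneg: "0 \<le> (LINT t:A|M. g t)"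
    unfolding set_lebesgue_integral_def
    by (intro Bochner_Integration.integral_nonneg) (simp add: assms(5) indicator_def)
  moreover have le: "(LINT t:A|M. g t) \<le> k powr p * (LINT t:A|M. h t)"
    using set_integral_mono[OF assms(1) set_integrable_mult_right[OF assms(2)] assms(6)] by simp
  ultimately have "(LINT t:A|M. g t) powr (1 / p) \<le> (k powr p * (LINT t:A|M. h t)) powr (1 / p)"
    using assms(3) by (intro powr_mono2) auto
  also have "\<dots> = k * (LINT t:A|M. h t) powr (1 / p)"
    using assms(3,4) nonneg le
    by (subst powr_mult) (auto simp: powr_powr intro: order_trans)
  finally show ?thesis .
qed

lemma set_integral_sum_harmonic_blocks:
  fixes h :: "real \<Rightarrow> real"
  assumes "0 < c" and h: "\<And>a. 0 < a \<Longrightarrow> set_integrable lborel {a..c} h"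
  shows "(\<Sum>m = 1..n. LINT t:{c / real (m + 1)..c / real m}|lborel. h t)
    = (LINT t:{c / real (n + 1)..c}|lborel. h t)"
proof -
  have hk: "(LINT t:{a..b}|lborel. h t) = integral {a..b} h" "h integrable_on {a..b}"
    if "0 < a" "b \<le> c" for a b
    using set_borel_integral_eq_integral[OF set_integrable_subset[OF h[OF \<open>0 < a\<close>]]] that
    by auto
  have harmonic: "c / real (m + 1) \<le> c / real m" "c / real m \<le> c" if "1 \<le> m" for m
    using \<open>0 < c\<close> that by (auto simp: field_simps)
  show ?thesis
  proof (induction n)
    case 0
    show ?case using hk(1)[of c c] \<open>0 < c\<close> by simp
  next
    case (Suc n)
    have "(\<Sum>m = 1..Suc n. LINT t:{c / real (m + 1)..c / real m}|lborel. h t)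
        = integral {c / real (Suc n + 1)..c / real (Suc n)} h + integral {c / real (Suc n)..c} h"
      using Suc \<open>0 < c\<close> harmonic[of "Suc n"] by (simp add: hk)
    also have "\<dots> = integral {c / real (Suc n + 1)..c} h"
      using harmonic[of "Suc n"] \<open>0 < c\<close>
      by (intro Henstock_Kurzweil_Integration.integral_combine hk(2)) auto
    finally show ?case using \<open>0 < c\<close> by (simp add: hk)
  qed
qed

lemma abs_add3_powr_le:
  fixes u v w p :: real
  assumes "0 \<le> p"
  shows "\<bar>u + v + w\<bar> powr p \<le> 3 powr p * (\<bar>u\<bar> powr p + \<bar>v\<bar> powr p + \<bar>w\<bar> powr p)"
proof -
  define M where "M = max \<bar>u\<bar> (max \<bar>v\<bar> \<bar>w\<bar>)"
  have "\<bar>u + v + w\<bar> powr p \<le> (3 * M) powr p"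
    by (intro powr_mono2 assms) (auto simp: M_def max_def)
  also have "\<dots> = 3 powr p * M powr p" by (simp add: M_def powr_mult)
  also have "M powr p \<le> \<bar>u\<bar> powr p + \<bar>v\<bar> powr p + \<bar>w\<bar> powr p"
    by (auto simp: M_def max_def)
  finally show ?thesis by simp
qed

lemma Lp_periodic_phi_powr_set_integrable:
  assumes "Lp_periodic p f" "0 \<le> p"
  shows "set_integrable lborel {a..b} (\<lambda>t. \<bar>phi f x t\<bar> powr p)"
proof -
  from assms(1) have [measurable]: "f \<in> borel_measurable borel"
    and per: "\<And>t. f (t + 2 * pi) = f t"
    and int: "set_integrable lborel {-pi..pi} (\<lambda>t. \<bar>f t\<bar> powr p)"
    by (auto simp: Lp_periodic_def)
  have f_int: "set_integrable lborel {c..d} (\<lambda>t. \<bar>f t\<bar> powr p)" for c d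
    by (rule set_integrable_periodic[of "-pi" "2 * pi"]) (use int per in auto)
  have "set_integrable lborel {a..b} (\<lambda>t. \<bar>f (x + 1 * t)\<bar> powr p)"
    and "set_integrable lborel {a..b} (\<lambda>t. \<bar>f (x + (-1) * t)\<bar> powr p)"
    by (intro set_integrable_compose_affine[OF f_int]; simp)+
  moreover have "set_integrable lborel {a..b} (\<lambda>t. \<bar>- (2 * f x)\<bar> powr p)"
    by (rule borel_integrable_atLeastAtMost') simp
  ultimately have bound_int: "set_integrable lborel {a..b}
      (\<lambda>t. 3 powr p * (\<bar>f (x + t)\<bar> powr p + \<bar>f (x - t)\<bar> powr p + \<bar>- (2 * f x)\<bar> powr p))"
    by (intro set_integrable_mult_right set_integral_add(1)) auto
  show ?thesis
  proof (rule set_integrable_bound[OF bound_int])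
    show "set_borel_measurable lborel {a..b} (\<lambda>t. \<bar>phi f x t\<bar> powr p)"
      unfolding set_borel_measurable_def phi_def by measurable
    show "AE t in lborel. t \<in> {a..b} \<longrightarrow> norm (\<bar>phi f x t\<bar> powr p) \<le>
        norm (3 powr p * (\<bar>f (x + t)\<bar> powr p + \<bar>f (x - t)\<bar> powr p + \<bar>- (2 * f x)\<bar> powr p))"
    proof (intro AE_I2 impI)
      fix t
      show "norm (\<bar>phi f x t\<bar> powr p) \<le>
          norm (3 powr p * (\<bar>f (x + t)\<bar> powr p + \<bar>f (x - t)\<bar> powr p + \<bar>- (2 * f x)\<bar> powr p))"
        using abs_add3_powr_le[OF assms(2), of "f (x + t)" "f (x - t)" "- (2 * f x)"]
        by (simp add: phi_def)
    qed
  qed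
qed

lemma Lp_periodic_phi_quotient_set_integrable:
  assumes "Lp_periodic p f" "0 \<le> p"
    and u: "continuous_on {a..b} u" "\<And>t. t \<in> {a..b} \<Longrightarrow> 0 < u t"
    and v: "continuous_on {a..b} v"
  shows "set_integrable lborel {a..b} (\<lambda>t. (\<bar>phi f x t\<bar> / u t) powr p * v t)"
proof -
  have [measurable]: "f \<in> borel_measurable borel" using assms(1) by (simp add: Lp_periodic_def)
  have int: "set_integrable lborel {a..b} (\<lambda>t. (v t / u t powr p) * \<bar>phi f x t\<bar> powr p)"
  proof (rule set_integrable_continuous_mult)
    show "set_integrable lborel {a..b} (\<lambda>t. \<bar>phi f x t\<bar> powr p)"
      by (rule Lp_periodic_phi_powr_set_integrable[OF assms(1,2)])
    show "(\<lambda>t. \<bar>phi f x t\<bar> powr p) \<in> borel_measurable borel"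
      unfolding phi_def by measurable
    show "continuous_on {a..b} (\<lambda>t. v t / u t powr p)"
      by (intro continuous_intros u(1) v) (use u(2) in force)+
  qed
  have "(v t / u t powr p) * \<bar>phi f x t\<bar> powr p = (\<bar>phi f x t\<bar> / u t) powr p * v t"
    if "t \<in> {a..b}" for t
    using u(2)[OF that] by (simp add: powr_divide)
  then show ?thesis by (rule set_integrable_cong[THEN iffD1, OF refl refl _ int])
qed

lemma modulus_type_pos:
  assumes "modulus_type \<omega>" "0 < t" "t \<le> 2 * pi"
  shows "0 < \<omega> t"
  using assms by (auto simp: modulus_type_def)

lemma Lp_periodic_phi_modulus_set_integrable:
  assumes "Lp_periodic p f" "modulus_type \<omega>" "0 \<le> p" "0 < a" "b \<le> pi"
  shows "set_integrable lborel {a..b}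
      (\<lambda>t. (\<bar>phi f x t\<bar> / (t powr \<gamma> * \<omega> t)) powr p * sin (t / 2) powr (\<beta> * p))"
    and "set_integrable lborel {a..b}
      (\<lambda>t. (\<bar>phi f x t\<bar> / \<omega> t) powr p * sin (t / 2) powr (\<beta> * p))"
proof -
  have sub: "{a..b} \<subseteq> {0<..2 * pi}" using assms(4,5) pi_gt_zero by auto
  have \<omega>_cont: "continuous_on {a..b} \<omega>"
    by (rule continuous_on_subset[of "{0..2 * pi}"])
      (use assms(2) sub in \<open>auto simp: modulus_type_def\<close>)
  have \<omega>_pos: "0 < \<omega> t" if "t \<in> {a..b}" for t
    using modulus_type_pos[OF assms(2)] sub that by auto
  have sin_pos: "0 < sin (t / 2)" if "t \<in> {a..b}" for t
    using that assms(4,5) by (intro sin_gt_zero) auto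
  have sin_cont: "continuous_on {a..b} (\<lambda>t. sin (t / 2) powr (\<beta> * p))"
    by (intro continuous_intros) (use sin_pos in fastforce)+
  show "set_integrable lborel {a..b}
      (\<lambda>t. (\<bar>phi f x t\<bar> / (t powr \<gamma> * \<omega> t)) powr p * sin (t / 2) powr (\<beta> * p))"
    using assms(4) \<omega>_pos
    by (intro Lp_periodic_phi_quotient_set_integrable assms(1,3) sin_cont continuous_intros \<omega>_cont)
      auto
  show "set_integrable lborel {a..b}
      (\<lambda>t. (\<bar>phi f x t\<bar> / \<omega> t) powr p * sin (t / 2) powr (\<beta> * p))"
    by (intro Lp_periodic_phi_quotient_set_integrable assms(1,3) sin_cont \<omega>_cont \<omega>_pos)
qed

lemma phi_modulus_block_estimate:
  assumes "Lp_periodic p f" "modulus_type \<omega>" "0 < p" "0 \<le> \<gamma>" "1 \<le> m"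
  shows "(LINT t:{pi / real (m + 1)..pi / real m}|lborel.
      (\<bar>phi f x t\<bar> / \<omega> t) powr p * sin (t / 2) powr (\<beta> * p)) powr (1 / p)
    \<le> (2 * pi / (real m + 1)) powr \<gamma> * (LINT t:{pi / real (m + 1)..pi / real m}|lborel.
      (\<bar>phi f x t\<bar> / (t powr \<gamma> * \<omega> t)) powr p * sin (t / 2) powr (\<beta> * p)) powr (1 / p)"
proof (rule set_integral_root_le)
  have "pi / real m \<le> pi" using assms(5) by (simp add: field_simps)
  then show "set_integrable lborel {pi / real (m + 1)..pi / real m}
      (\<lambda>t. (\<bar>phi f x t\<bar> / \<omega> t) powr p * sin (t / 2) powr (\<beta> * p))"
    and "set_integrable lborel {pi / real (m + 1)..pi / real m}
      (\<lambda>t. (\<bar>phi f x t\<bar> / (t powr \<gamma> * \<omega> t)) powr p * sin (t / 2) powr (\<beta> * p))"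
    using Lp_periodic_phi_modulus_set_integrable[OF assms(1,2)] assms(3) by auto
  fix t assume t: "t \<in> {pi / real (m + 1)..pi / real m}"
  have "0 < pi / real (m + 1)" by simp
  then have "0 < t" using t by (meson atLeastAtMost_iff less_le_trans)
  have "pi / real m \<le> 2 * pi / (real m + 1)" "pi / real m \<le> 2 * pi"
    using assms(5) by (auto simp: field_simps)
  then have "t \<le> 2 * pi / (real m + 1)" "t \<le> 2 * pi" using t by auto
  moreover have "0 < \<omega> t"
    using modulus_type_pos[OF assms(2) \<open>0 < t\<close>] \<open>t \<le> 2 * pi\<close> .
  ultimately have "(\<bar>phi f x t\<bar> / \<omega> t) powr p
      = t powr (\<gamma> * p) * (\<bar>phi f x t\<bar> / (t powr \<gamma> * \<omega> t)) powr p"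
    using \<open>0 < t\<close> by (simp add: powr_divide powr_mult powr_powr)
  also have "\<dots> \<le> ((2 * pi / (real m + 1)) powr \<gamma>) powr p * (\<bar>phi f x t\<bar> / (t powr \<gamma> * \<omega> t)) powr p"
    using \<open>0 < t\<close> \<open>t \<le> 2 * pi / (real m + 1)\<close> assms(3,4)
    by (intro mult_right_mono) (auto simp: powr_powr intro: powr_mono2)
  finally show "(\<bar>phi f x t\<bar> / \<omega> t) powr p * sin (t / 2) powr (\<beta> * p)
      \<le> ((2 * pi / (real m + 1)) powr \<gamma>) powr p *
        ((\<bar>phi f x t\<bar> / (t powr \<gamma> * \<omega> t)) powr p * sin (t / 2) powr (\<beta> * p))"
    by (metis mult.assoc mult_right_mono powr_ge_zero)
qed (use assms(3) in auto)

lemma phi_modulus_block_sum_le: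
  assumes "Lp_periodic p f" "modulus_type \<omega>" "0 < p" "0 \<le> \<gamma>"
  shows "(\<Sum>m = 1..n. (real m + 1) powr e * (LINT t:{pi / real (m + 1)..pi / real m}|lborel.
      (\<bar>phi f x t\<bar> / \<omega> t) powr p * sin (t / 2) powr (\<beta> * p)) powr (1 / p))
    \<le> (2 * pi) powr \<gamma> * (\<Sum>m = 1..n. (real m + 1) powr (e - \<gamma>) *
      (LINT t:{pi / real (m + 1)..pi / real m}|lborel.
        (\<bar>phi f x t\<bar> / (t powr \<gamma> * \<omega> t)) powr p * sin (t / 2) powr (\<beta> * p)) powr (1 / p))"
    (is "_ \<le> _ * (\<Sum>m = 1..n. _ * ?J m powr (1 / p))")
proof -
  have "(\<Sum>m = 1..n. (real m + 1) powr e * (LINT t:{pi / real (m + 1)..pi / real m}|lborel.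
      (\<bar>phi f x t\<bar> / \<omega> t) powr p * sin (t / 2) powr (\<beta> * p)) powr (1 / p))
    \<le> (\<Sum>m = 1..n. (real m + 1) powr e * ((2 * pi / (real m + 1)) powr \<gamma> * ?J m powr (1 / p)))"
    by (intro sum_mono mult_left_mono phi_modulus_block_estimate[OF assms]) auto
  also have "\<dots> = (2 * pi) powr \<gamma> * (\<Sum>m = 1..n. (real m + 1) powr (e - \<gamma>) * ?J m powr (1 / p))"
    by (simp add: sum_distrib_left powr_divide powr_diff mult_ac)
  finally show ?thesis .
qed

theorem lemma3:
  fixes p q \<beta> \<gamma> x :: real and f \<omega> :: "real \<Rightarrow> real"
  assumes "1 < p" and "q = p / (p - 1)" and "\<beta> \<ge> 0" and "0 \<le> \<gamma>" and "\<gamma> < \<beta> + 1 / p"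
    and "Lp_periodic p f" and "modulus_type \<omega>"
    and "\<exists>C. \<forall>n::nat. n \<ge> 1 \<longrightarrow>
      (LINT t:{pi / (n + 1)..pi}|lborel.
          (\<bar>phi f x t\<bar> / (t powr \<gamma> * \<omega> t)) powr p * sin (t / 2) powr (\<beta> * p)) powr (1 / p)
        \<le> C * (real n + 1) powr \<gamma>"
  shows "\<exists>C. \<forall>n::nat. n \<ge> 1 \<longrightarrow>
      (\<Sum>m = 1..n. (real m + 1) powr (\<beta> + 1 - 2 / q) *
        (LINT t:{pi / (m + 1)..pi / m}|lborel.
          (\<bar>phi f x t\<bar> / \<omega> t) powr p * sin (t / 2) powr (\<beta> * p)) powr (1 / p))
        \<le> C * (real n + 1) powr (\<beta> + 1 / p)"
proof -
  define H where "H t = (\<bar>phi f x t\<bar> / (t powr \<gamma> * \<omega> t)) powr p * sin (t / 2) powr (\<beta> * p)" for t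
  define J where "J m = (LINT t:{pi / real (m + 1)..pi / real m}|lborel. H t)" for m :: nat
  define \<delta> where "\<delta> = \<beta> + 1 - 2 / q - \<gamma>"
  have q: "1 < q" "1 / p + 1 / q = 1"
    using assms(1) unfolding assms(2) by (simp_all add: field_simps)
  have "\<delta> + 1 / q + \<gamma> = \<beta> + 1 / p"
    using q(2) by (simp add: \<delta>_def)
  then have "0 < (\<delta> + 1 / q) * q" using q(1) assms(5) by simp
  then have "-1 < \<delta> * q" using q(1) by (simp add: distrib_right)
  obtain C where "\<And>n. 1 \<le> n \<Longrightarrow> (LINT t:{pi / real (n + 1)..pi}|lborel. H t) powr (1 / p) \<le> C * (real n + 1) powr \<gamma>"
    using assms(8) unfolding H_def by blast
  moreover have "(\<Sum>m = 1..n. J m) = (LINT t:{pi / real (n + 1)..pi}|lborel. H t)" for n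
    unfolding J_def H_def using Lp_periodic_phi_modulus_set_integrable(1)[OF assms(6,7)] assms(1)
    by (intro set_integral_sum_harmonic_blocks) auto
  moreover have "0 \<le> J m" for m
    unfolding J_def H_def set_lebesgue_integral_def by (intro Bochner_Integration.integral_nonneg) simp
  ultimately obtain c where c: "\<And>n. 1 \<le> n \<Longrightarrow>
      (\<Sum>m = 1..n. (real m + 1) powr \<delta> * J m powr (1 / p)) \<le> c * (real n + 1) powr (\<beta> + 1 / p)"
    using weighted_root_sum_le[OF assms(1) q \<open>-1 < \<delta> * q\<close>, of J C \<gamma>]
      \<open>\<delta> + 1 / q + \<gamma> = \<beta> + 1 / p\<close> by auto
  show ?thesis
    using assms(1) c[unfolded J_def H_def \<delta>_def]
    by (intro exI[of _ "(2 * pi) powr \<gamma> * c"] allI impI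
        order_trans[OF phi_modulus_block_sum_le[OF assms(6,7) _ assms(4)]])
      (auto simp: mult.assoc)
qed

end
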